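(* Let $s\ge2$, $\Delta=\{D_1,\dots,D_{2s+1}\}$, set $D_i=0$ for $i\le0$ and $i\ge2s+2$, and in $\mathbb Z\Delta$ let $\Sigma=\{\sigma_1,\dots,\sigma_{2s}\}$ with $\sigma_i=-D_{i-1}+D_i+D_{i+1}-D_{i+2}$ for $i\ne2s-2$ and $\sigma_{2s-2}=-D_{2s-3}+D_{2s-2}+D_{2s-1}-D_{2s}-D_{2s+1}$. Let $(D,E,F)$ be a low fundamental triple, put $\gamma=D+E-F$, and suppose $\sigma_{2s}\in\mathrm{supp}_\Sigma\gamma$. Then, up to exchanging $D$ and $E$, $(D,E,F)$ is one of: $(D_{2m+1},D_{2s},D_{2m-1}+D_{2s+1})$ for some $1\le m<s$, with $\gamma=\sum_{i=2m}^{2s}\sigma_i$; $(D_{2s},D_{2s},D_{2s-3})$ with $\gamma=\sigma_{2s-2}+\sigma_{2s-1}+2\sigma_{2s}$; $(D_{2s},D_{2s},D_{2s-2})$ with $\gamma=\sigma_{2s-1}+\sigma_{2s}$; $(D_{2s},D_{2s+1},D_{2s-1})$ with $\gamma=\sigma_{2s}$.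
   Context: For $D,E\in\mathbb Z\Delta$ write $D\le_\Sigma E$ if $E-D\in\mathbb N\Sigma$. A triple $(D,E,F)\in(\mathbb N\Delta)^3$ with $F\le_\Sigma D+E$ is low if for all $D',E'\in\mathbb N\Delta$ with $D'\le_\Sigma D$, $E'\le_\Sigma E$ and $F\le_\Sigma D'+E'$ one has $D'=D$ and $E'=E$; it is fundamental if $D,E\in\Delta$. For $\gamma=\sum a_i\sigma_i$, $\mathrm{supp}_\Sigma\gamma=\{\sigma_i:a_i>0\}$. *)

theory Defs
  imports Main "HOL-Library.Function_Algebras"
begin

text \<open>Elements of the free abelian group Z Delta on Delta = {D_1,...,D_(2s+1)} are
  represented as coefficient functions nat => int (coefficient of D_j at j),
  supported in {1..2s+1}.\<close>

type_synonym zvec = "nat \<Rightarrow> int"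

definition Dv :: "nat \<Rightarrow> nat \<Rightarrow> zvec" where
  "Dv s i = (\<lambda>j. if j = i \<and> 1 \<le> i \<and> i \<le> 2*s+1 then 1 else 0)"

definition sigma :: "nat \<Rightarrow> nat \<Rightarrow> zvec" where
  "sigma s i = (if i = 2*s - 2
     then (\<lambda>j. - Dv s (i-1) j + Dv s i j + Dv s (i+1) j - Dv s (i+2) j - Dv s (i+3) j)
     else (\<lambda>j. - Dv s (i-1) j + Dv s i j + Dv s (i+1) j - Dv s (i+2) j))"

definition in_ZDelta :: "nat \<Rightarrow> zvec \<Rightarrow> bool" where
  "in_ZDelta s X \<longleftrightarrow> (\<forall>j. X j \<noteq> 0 \<longrightarrow> 1 \<le> j \<and> j \<le> 2*s+1)"

definition in_NDelta :: "nat \<Rightarrow> zvec \<Rightarrow> bool" where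
  "in_NDelta s X \<longleftrightarrow> in_ZDelta s X \<and> (\<forall>j. X j \<ge> 0)"

definition in_Delta :: "nat \<Rightarrow> zvec \<Rightarrow> bool" where
  "in_Delta s X \<longleftrightarrow> (\<exists>i. 1 \<le> i \<and> i \<le> 2*s+1 \<and> X = Dv s i)"

definition sigma_comb :: "nat \<Rightarrow> (nat \<Rightarrow> int) \<Rightarrow> zvec" where
  "sigma_comb s a = (\<lambda>j. \<Sum>i=1..2*s. a i * sigma s i j)"

definition in_NSigma :: "nat \<Rightarrow> zvec \<Rightarrow> bool" where
  "in_NSigma s X \<longleftrightarrow> (\<exists>a. (\<forall>i. a i \<ge> 0) \<and> X = sigma_comb s a)"

definition leS :: "nat \<Rightarrow> zvec \<Rightarrow> zvec \<Rightarrow> bool" where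
  "leS s D E \<longleftrightarrow> in_NSigma s (E - D)"

definition is_low :: "nat \<Rightarrow> zvec \<Rightarrow> zvec \<Rightarrow> zvec \<Rightarrow> bool" where
  "is_low s D E F \<longleftrightarrow> in_NDelta s D \<and> in_NDelta s E \<and> in_NDelta s F \<and> leS s F (D + E) \<and>
     (\<forall>D' E'. in_NDelta s D' \<longrightarrow> in_NDelta s E' \<longrightarrow> leS s D' D \<longrightarrow> leS s E' E \<longrightarrow>
        leS s F (D' + E') \<longrightarrow> D' = D \<and> E' = E)"

definition is_fundamental :: "nat \<Rightarrow> zvec \<Rightarrow> zvec \<Rightarrow> zvec \<Rightarrow> bool" where
  "is_fundamental s D E F \<longleftrightarrow> in_Delta s D \<and> in_Delta s E"

text \<open>sigma_i lies in supp_Sigma gamma: gamma = sum a_k sigma_k with a_i > 0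
  (coefficients are unique since Sigma is linearly independent).\<close>
definition in_suppS :: "nat \<Rightarrow> nat \<Rightarrow> zvec \<Rightarrow> bool" where
  "in_suppS s i \<gamma> \<longleftrightarrow> (\<exists>a. \<gamma> = sigma_comb s a \<and> a i > 0)"

end

theory Submission
  imports Defs
begin

text \<open>
  Write D = D_p, E = D_q with p \<le> q, and D + E - F = \<Sum> b_i \<sigma>_i with b \<ge> 0, extended by
  zero outside 1..2s. The coordinates of F are second differences of b, so with
  g k = b_k - b_(k-2) + [p < k] + [q < k] one has F_j = g (j+1) - g j for j \<le> 2s. Hence g is
  nondecreasing with values in [0, 2], a sum of two unit steps at thresholds t1 \<le> t2, and b
  is recovered from t1, t2, p, q by summing along residue classes mod 2. That this sum vanishes
  at 2s+1, together with b_2s \<ge> 1, b \<ge> 0 and F_(2s+1) \<ge> 0, gives inequalities between the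
  halves of t1, t2, p, q which leave few possibilities. Lowness removes the others: for even
  r \<le> 2s - 2 one has D_r - D_(r-1) = \<Sum> {\<sigma>_i | i even, i \<ge> r}, so D_r could be lowered
  to D_(r-1) if b_i \<ge> 1 at every even i \<ge> r.
\<close>

section \<open>Coordinates of \<Sigma>-combinations\<close>

definition sigma_coeff :: "nat \<Rightarrow> (nat \<Rightarrow> int) \<Rightarrow> nat \<Rightarrow> int" where
  "sigma_coeff s b k = (if 1 \<le> k \<and> k \<le> 2*s then b k else 0)"

lemma sum_mult_Dv_shift:
  "(\<Sum>i=1..2*s. b i * Dv s (i + d) j)
    = (if 1 \<le> j \<and> j \<le> 2*s+1 then sigma_coeff s b (j - d) else 0)"
proof -
  have "(\<Sum>i=1..2*s. b i * Dv s (i + d) j)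
      = (\<Sum>i\<in>{1..2*s}. if i = j - d then (if d \<le> j \<and> 1 \<le> j \<and> j \<le> 2*s+1 then b i else 0) else 0)"
    by (intro sum.cong) (auto simp: Dv_def)
  also have "\<dots> = (if 1 \<le> j \<and> j \<le> 2*s+1 then sigma_coeff s b (j - d) else 0)"
    by (subst sum.delta) (auto simp: sigma_coeff_def)
  finally show ?thesis .
qed

lemma sum_mult_Dv_pred:
  "(\<Sum>i=1..2*s. b i * Dv s (i - 1) j)
    = (if 1 \<le> j \<and> j \<le> 2*s+1 then sigma_coeff s b (j + 1) else 0)"
proof -
  have "(\<Sum>i=1..2*s. b i * Dv s (i - 1) j)
      = (\<Sum>i\<in>{1..2*s}. if i = j + 1 then (if 1 \<le> j \<and> j \<le> 2*s+1 then b i else 0) else 0)"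
    by (intro sum.cong) (auto simp: Dv_def)
  also have "\<dots> = (if 1 \<le> j \<and> j \<le> 2*s+1 then sigma_coeff s b (j + 1) else 0)"
    by (subst sum.delta) (auto simp: sigma_coeff_def)
  finally show ?thesis .
qed

lemma sum_mult_sigma_correction:
  assumes "2 \<le> s"
  shows "(\<Sum>i=1..2*s. b i * (if i = 2*s-2 then Dv s (i+3) j else 0))
       = (if j = 2*s+1 then sigma_coeff s b (2*s-2) else 0)"
proof -
  have "(\<Sum>i=1..2*s. b i * (if i = 2*s-2 then Dv s (i+3) j else 0))
      = (\<Sum>i\<in>{1..2*s}. if i = 2*s-2 then b i * Dv s (i+3) j else 0)"
    by (intro sum.cong) auto
  also have "\<dots> = (if j = 2*s+1 then sigma_coeff s b (2*s-2) else 0)"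
    using assms by (subst sum.delta) (auto simp: Dv_def sigma_coeff_def)
  finally show ?thesis .
qed

lemma sigma_comb_apply:
  assumes "2 \<le> s"
  shows "sigma_comb s b j = (if 1 \<le> j \<and> j \<le> 2*s+1 then
     sigma_coeff s b j + sigma_coeff s b (j-1) - sigma_coeff s b (j+1) - sigma_coeff s b (j-2)
       - (if j = 2*s+1 then sigma_coeff s b (2*s-2) else 0) else 0)"
proof -
  have "sigma_comb s b j = (\<Sum>i=1..2*s. - (b i * Dv s (i-1) j) + b i * Dv s (i+0) j
      + b i * Dv s (i+1) j - b i * Dv s (i+2) j - b i * (if i = 2*s-2 then Dv s (i+3) j else 0))"
    unfolding sigma_comb_def by (intro sum.cong) (auto simp: sigma_def algebra_simps)
  also have "\<dots> = - (\<Sum>i=1..2*s. b i * Dv s (i-1) j) + (\<Sum>i=1..2*s. b i * Dv s (i+0) j)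
      + (\<Sum>i=1..2*s. b i * Dv s (i+1) j) - (\<Sum>i=1..2*s. b i * Dv s (i+2) j)
      - (\<Sum>i=1..2*s. b i * (if i = 2*s-2 then Dv s (i+3) j else 0))"
    by (simp add: sum.distrib sum_subtractf sum_negf)
  finally show ?thesis
    unfolding sum_mult_Dv_pred sum_mult_Dv_shift sum_mult_sigma_correction[OF assms] by auto
qed

lemma sigma_comb_diff: "sigma_comb s (\<lambda>i. x i - y i) j = sigma_comb s x j - sigma_comb s y j"
  by (simp add: sigma_comb_def sum_subtractf left_diff_distrib)

lemma sigma_comb_cong:
  "(\<And>i. 1 \<le> i \<Longrightarrow> i \<le> 2*s \<Longrightarrow> x i = y i) \<Longrightarrow> sigma_comb s x = sigma_comb s y"
  unfolding sigma_comb_def by (intro ext sum.cong) auto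

lemma sigma_coeff_eq_0_if_sigma_comb_eq_0:
  assumes s: "2 \<le> s" and z: "\<And>j. sigma_comb s z j = 0"
  shows "sigma_coeff s z k = 0"
proof -
  let ?c = "sigma_coeff s z"
  have rec: "?c (j+1) = ?c j + ?c (j-1) - ?c (j-2)" if "1 \<le> j" "j \<le> 2*s" for j
    using sigma_comb_apply[OF s, of z j] z[of j] that by simp
  \<comment> \<open>with \<open>?c 0 = 0\<close> the recurrence forces \<open>?c k = ?c 1 * \<lceil>k/2\<rceil>\<close>\<close>
  have pair: "?c (2*n) = ?c 1 * int n \<and> ?c (2*n+1) = ?c 1 * (int n + 1)
      \<and> ?c (2*n-1) = ?c 1 * int n" if "n \<le> s" for n
    using that
  proof (induction n)
    case 0
    then show ?case by (simp add: sigma_coeff_def)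
  next
    case (Suc n)
    have "?c (2*n+2) = ?c (2*n+1) + ?c (2*n) - ?c (2*n-1)"
      using rec[of "2*n+1"] Suc.prems by simp
    moreover have "?c (2*n+2+1) = ?c (2*n+2) + ?c (2*n+1) - ?c (2*n)"
      using rec[of "2*n+2"] Suc.prems by simp
    ultimately show ?case using Suc by (simp add: algebra_simps)
  qed
  have "?c 1 * (int s + 1) = 0"
    using pair[of s] by (simp add: sigma_coeff_def)
  then have "?c 1 = 0" by simp
  show ?thesis
  proof (cases "k \<le> 2*s")
    case True
    then have "k div 2 \<le> s" by simp
    then show ?thesis
      using pair[of "k div 2"] \<open>?c 1 = 0\<close> by (cases "even k") (auto elim!: evenE oddE)
  qed (simp add: sigma_coeff_def)
qed

lemma sigma_comb_coeff_unique:
  assumes "2 \<le> s" and "sigma_comb s x = sigma_comb s y" and "1 \<le> i" "i \<le> 2*s"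
  shows "x i = y i"
  using sigma_coeff_eq_0_if_sigma_comb_eq_0[OF assms(1), of "\<lambda>i. x i - y i" i] assms
  by (simp add: sigma_comb_diff sigma_coeff_def)

lemma sigma_comb_indicator_tail:
  assumes "1 \<le> k"
  shows "sigma_comb s (\<lambda>i. of_bool (k \<le> i)) = (\<lambda>j. \<Sum>i=k..2*s. sigma s i j)"
proof
  fix j
  have "sigma_comb s (\<lambda>i. of_bool (k \<le> i)) j = (\<Sum>i\<in>{1..2*s}. if k \<le> i then sigma s i j else 0)"
    unfolding sigma_comb_def by (intro sum.cong) auto
  also have "\<dots> = (\<Sum>i\<in>{i\<in>{1..2*s}. k \<le> i}. sigma s i j)"
    by (rule sum.inter_filter[symmetric]) simp
  also have "{i\<in>{1..2*s}. k \<le> i} = {k..2*s}"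
    using assms by auto
  finally show "sigma_comb s (\<lambda>i. of_bool (k \<le> i)) j = (\<Sum>i=k..2*s. sigma s i j)" .
qed

lemma sigma_comb_top_three:
  assumes s: "2 \<le> s" and c: "\<And>i. 1 \<le> i \<Longrightarrow> i < 2*s-2 \<Longrightarrow> c i = 0"
  shows "sigma_comb s c j
    = c (2*s-2) * sigma s (2*s-2) j + c (2*s-1) * sigma s (2*s-1) j + c (2*s) * sigma s (2*s) j"
proof -
  have "sigma_comb s c j = (\<Sum>i\<in>{2*s-2..2*s}. c i * sigma s i j)"
    unfolding sigma_comb_def using s c by (intro sum.mono_neutral_right) auto
  also have "{2*s-2..2*s} = {2*s-2, 2*s-1, 2*s}"
    using s by auto
  moreover have "2*s-2 \<noteq> 2*s-1" "2*s-2 \<noteq> 2*s" "2*s-1 \<noteq> 2*s"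
    using s by auto
  ultimately show ?thesis
    by (simp add: algebra_simps)
qed

section \<open>Lowering D_r to D_(r-1)\<close>

text \<open>The sum of the \<sigma>_i over even i \<ge> r telescopes; the extra -D_(2s+1) in \<sigma>_(2s-2)
  cancels the D_(2s+1) left over by \<sigma>_2s.\<close>

lemma Dv_minus_Dv_pred:
  assumes s: "2 \<le> s" and r: "even r" "2 \<le> r" "r \<le> 2*s-2"
  shows "Dv s r - Dv s (r-1) = sigma_comb s (\<lambda>i. of_bool (even i \<and> r \<le> i))"
proof
  fix j
  let ?c = "sigma_coeff s (\<lambda>i. of_bool (even i \<and> r \<le> i))"
  have c: "?c k = of_bool (even k \<and> r \<le> k \<and> k \<le> 2*s)" for k
    using r by (auto simp: sigma_coeff_def)
  have "?c j + ?c (j-1) - ?c (j+1) - ?c (j-2) - of_bool (j = 2*s+1) * ?c (2*s-2)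
      = of_bool (j = r) - of_bool (j = r - 1)" if "1 \<le> j" "j \<le> 2*s+1"
  proof (cases "even j")
    case True
    have "r \<le> j - 2 \<longleftrightarrow> r \<le> j \<and> j \<noteq> r" "even (j-2)" "j \<le> 2*s" "j - 2 \<le> 2*s"
      using True that r by presburger+
    then have "?c j - ?c (j-2) = of_bool (j = r)"
      unfolding c using True by (cases "r \<le> j") simp_all
    moreover have "odd (j-1)" "odd (j+1)" "j \<noteq> 2*s+1" "j \<noteq> r - 1"
      using True that r by presburger+
    then have "?c (j-1) = 0" "?c (j+1) = 0" "j \<noteq> 2*s+1" "j \<noteq> r - 1"
      unfolding c by simp_all
    ultimately show ?thesis by simp
  next
    case odd: False
    show ?thesis
    proof (cases "j = 2*s+1")
      case True
      then show ?thesis unfolding c using r by auto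
    next
      case False
      have "even (j-1)" "even (j+1)" "odd (j-2) \<or> j = 1" "j + 1 \<le> 2*s" "j \<noteq> r"
        "r \<le> j + 1 \<longleftrightarrow> r \<le> j - 1 \<or> j = r - 1" "\<not> (r \<le> j - 1 \<and> j = r - 1)"
        using odd False that r by presburger+
      then show ?thesis unfolding c using odd False r by (cases "r \<le> j - 1") auto
    qed
  qed
  then show "(Dv s r - Dv s (r-1)) j = sigma_comb s (\<lambda>i. of_bool (even i \<and> r \<le> i)) j"
    unfolding sigma_comb_apply[OF s] using r s by (auto simp: Dv_def)
qed

lemma low_descent_blocked:
  assumes s: "2 \<le> s" and low: "is_low s (Dv s r) E F"
    and gamma: "Dv s r + E - F = sigma_comb s b" and b: "\<And>i. 0 \<le> b i"
    and r: "even r" "2 \<le> r" "r \<le> 2*s-2"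
  shows "\<exists>i. even i \<and> r \<le> i \<and> i \<le> 2*s \<and> b i = 0"
proof (rule ccontr)
  assume "\<not> ?thesis"
  then have b1: "1 \<le> b i" if "even i" "r \<le> i" "i \<le> 2*s" for i
    using b[of i] that by force
  define c where "c = (\<lambda>i. of_bool (even i \<and> r \<le> i) :: int)"
  \<comment> \<open>\<open>sigma_comb\<close> ignores indices above \<open>2s\<close>, where \<open>b - c\<close> may be negative\<close>
  define b' where "b' = (\<lambda>i. if i \<le> 2*s then b i - c i else b i)"
  have "Dv s r - Dv s (r-1) = sigma_comb s c"
    unfolding c_def by (rule Dv_minus_Dv_pred[OF s r])
  then have "leS s (Dv s (r-1)) (Dv s r)"
    unfolding leS_def in_NSigma_def by (intro exI[of _ c]) (simp add: c_def)
  moreover have "Dv s (r-1) + E - F = sigma_comb s b'"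
  proof
    fix j
    have "sigma_comb s b' = sigma_comb s (\<lambda>i. b i - c i)"
      unfolding b'_def by (rule sigma_comb_cong) simp
    then show "(Dv s (r-1) + E - F) j = sigma_comb s b' j"
      using fun_cong[OF gamma, of j] fun_cong[OF \<open>Dv s r - Dv s (r-1) = sigma_comb s c\<close>, of j]
      by (simp add: sigma_comb_diff)
  qed
  then have "leS s F (Dv s (r-1) + E)"
    unfolding leS_def in_NSigma_def using b b1 by (intro exI[of _ b']) (auto simp: b'_def c_def)
  moreover have "leS s E E"
    unfolding leS_def in_NSigma_def by (intro exI[of _ "\<lambda>_. 0"]) (auto simp: sigma_comb_def)
  moreover have "in_NDelta s (Dv s (r-1))" "in_NDelta s E"
    using low r by (auto simp: is_low_def in_NDelta_def in_ZDelta_def Dv_def)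
  ultimately have "Dv s (r-1) = Dv s r"
    using low unfolding is_low_def by blast
  then have "Dv s (r-1) r = Dv s r r" by simp
  then show False
    using r s by (simp add: Dv_def split: if_splits)
qed

section \<open>Thresholds and parity counts\<close>

lemma monotone_threshold:
  fixes g :: "nat \<Rightarrow> int"
  assumes mono: "\<And>j. j \<in> {1..<N} \<Longrightarrow> g j \<le> g (Suc j)"
  shows "\<exists>t. 1 \<le> t \<and> t \<le> N + 1 \<and> (\<forall>i\<in>{1..N}. c \<le> g i \<longleftrightarrow> t \<le> i)"
proof -
  define P where "P t \<longleftrightarrow> 1 \<le> t \<and> (t = N + 1 \<or> t \<le> N \<and> c \<le> g t)" for t
  define t where "t = (LEAST t. P t)"
  have "P (N + 1)" by (simp add: P_def)
  then have Pt: "P t" and t_least: "\<And>t'. P t' \<Longrightarrow> t \<le> t'"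
    unfolding t_def by (auto intro: LeastI Least_le)
  have "c \<le> g i \<longleftrightarrow> t \<le> i" if "i \<in> {1..N}" for i
  proof
    assume "c \<le> g i"
    then show "t \<le> i" using that by (intro t_least) (simp add: P_def)
  next
    assume "t \<le> i"
    moreover from this Pt that have "1 \<le> t" "t \<le> N" "c \<le> g t" by (auto simp: P_def)
    ultimately show "c \<le> g i"
      using lift_Suc_mono_le_ivl[of "{1..<N}" g t i] mono that by fastforce
  qed
  moreover have "t \<le> N + 1" using t_least[OF \<open>P (N + 1)\<close>] .
  ultimately show ?thesis using Pt by (auto simp: P_def)
qed

lemma pos_part_combination_ge_1:
  fixes K e1 e2 e3 e4 :: int
  assumes "e1 \<le> e2" "e3 \<le> e4" "e1 \<le> e3" "e3 \<le> K" "e1 + e2 + 1 \<le> e3 + e4" "e4 \<le> K \<or> e1 < e3"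
  shows "1 \<le> max 0 (K - e1) + max 0 (K - e2) - max 0 (K - e3) - max 0 (K - e4)"
  using assms unfolding max_def by (smt (verit))

text \<open>\<open>parity_count x k\<close> is the number of \<open>i\<close> with \<open>x \<le> i \<le> k\<close> and \<open>i \<equiv> k (mod 2)\<close>.\<close>

definition parity_count :: "nat \<Rightarrow> nat \<Rightarrow> int" where
  "parity_count x k = (if x \<le> k then int ((k - x) div 2) + 1 else 0)"

lemma parity_count_below: "k < x \<Longrightarrow> parity_count x k = 0"
  by (simp add: parity_count_def)

lemma parity_count_step:
  assumes "1 \<le> x"
  shows "parity_count x k = parity_count x (k - 2) + of_bool (x \<le> k)"
proof (cases "x + 2 \<le> k")
  case True
  then have "k - x = (k - 2 - x) + 2" by simp
  then show ?thesis using True by (simp add: parity_count_def)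
next
  case False
  then have "(k - x) div 2 = 0" by simp
  then show ?thesis using False assms by (simp add: parity_count_def)
qed

lemma parity_count_odd: "parity_count x (2*K+1) = max 0 (int K + 1 - int (x div 2))"
  unfolding parity_count_def by (simp add: max_def; presburger)

lemma parity_count_even: "1 \<le> x \<Longrightarrow> parity_count x (2*K) = max 0 (int K - int ((x - 1) div 2))"
  unfolding parity_count_def by (simp add: max_def; presburger)

lemma parity_count_diff2: "parity_count x k - parity_count (x + 2) k = of_bool (x \<le> k)"
  unfolding parity_count_def by (simp; presburger)

definition low_triple_top_cases :: "nat \<Rightarrow> zvec \<Rightarrow> zvec \<Rightarrow> zvec \<Rightarrow> bool" where
  "low_triple_top_cases s D E F \<longleftrightarrow>
     (\<exists>m. 1 \<le> m \<and> m < s \<and> D = Dv s (2*m+1) \<and> E = Dv s (2*s)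
        \<and> F = Dv s (2*m-1) + Dv s (2*s+1)
        \<and> D + E - F = (\<lambda>j. \<Sum>i=2*m..2*s. sigma s i j))
     \<or> (D = Dv s (2*s) \<and> E = Dv s (2*s) \<and> F = Dv s (2*s-3)
        \<and> D + E - F = sigma s (2*s-2) + sigma s (2*s-1) + 2 * sigma s (2*s))
     \<or> (D = Dv s (2*s) \<and> E = Dv s (2*s) \<and> F = Dv s (2*s-2)
        \<and> D + E - F = sigma s (2*s-1) + sigma s (2*s))
     \<or> (D = Dv s (2*s) \<and> E = Dv s (2*s+1) \<and> F = Dv s (2*s-1)
        \<and> D + E - F = sigma s (2*s))"

locale top_support_triple =
  fixes s p q :: nat and F :: zvec and b :: "nat \<Rightarrow> int"
  assumes s_ge_2: "2 \<le> s"
    and p_ge_1: "1 \<le> p" and p_le_q: "p \<le> q" and q_le: "q \<le> 2*s+1"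
    and F_NDelta: "in_NDelta s F"
    and gamma_eq: "Dv s p + Dv s q - F = sigma_comb s b"
    and b_nonneg: "\<And>i. 0 \<le> b i"
    and b_top: "1 \<le> b (2*s)"
    \<comment> \<open>the only consequence of lowness that is needed, cf. \<open>low_descent_blocked\<close>\<close>
    and descent_blocked:
      "\<And>r. r \<in> {p, q} \<Longrightarrow> even r \<Longrightarrow> 2 \<le> r \<Longrightarrow> r \<le> 2*s-2 \<Longrightarrow>
        \<exists>i. even i \<and> r \<le> i \<and> i \<le> 2*s \<and> b i = 0"
begin

abbreviation a :: "nat \<Rightarrow> int" where "a \<equiv> sigma_coeff s b"

lemma a_nonneg: "0 \<le> a k"
  using b_nonneg by (simp add: sigma_coeff_def)

lemma a_eq_b: "1 \<le> i \<Longrightarrow> i \<le> 2*s \<Longrightarrow> a i = b i"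
  by (simp add: sigma_coeff_def)

lemma a_outside: "k = 0 \<or> 2*s < k \<Longrightarrow> a k = 0"
  by (auto simp: sigma_coeff_def)

lemma F_coord:
  assumes "1 \<le> j" "j \<le> 2*s+1"
  shows "F j = of_bool (j = p) + of_bool (j = q)
    - (a j + a (j-1) - a (j+1) - a (j-2) - of_bool (j = 2*s+1) * a (2*s-2))"
  using fun_cong[OF gamma_eq, of j] sigma_comb_apply[OF s_ge_2, of b j] assms p_ge_1 p_le_q q_le
  by (auto simp: Dv_def)

lemma F_nonneg: "0 \<le> F j"
  using F_NDelta by (simp add: in_NDelta_def)

lemma F_outside: "\<not> (1 \<le> j \<and> j \<le> 2*s+1) \<Longrightarrow> F j = 0"
  using F_NDelta by (auto simp: in_NDelta_def in_ZDelta_def)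

text \<open>The coordinate formula for \<open>F\<close> is a first difference:
  \<open>a j + a (j-1) - a (j+1) - a (j-2) = e j - e (j+1)\<close> with \<open>e k = a k - a (k-2)\<close>.\<close>

definition g :: "nat \<Rightarrow> int" where
  "g k = a k - a (k-2) + of_bool (p < k) + of_bool (q < k)"

lemma g_step:
  assumes "1 \<le> j" "j \<le> 2*s"
  shows "g (Suc j) - g j = F j"
  using F_coord[of j] assms by (simp add: g_def)

lemma g_mono: "j \<in> {1..<2*s+1} \<Longrightarrow> g j \<le> g (Suc j)"
  using g_step[of j] F_nonneg[of j] by simp

lemma g_bounds:
  assumes "i \<in> {1..2*s+1}"
  shows "0 \<le> g i \<and> g i \<le> 2"
proof
  have "0 \<le> g 1"
    using p_ge_1 a_nonneg[of 1] a_outside[of 0] by (simp add: g_def)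
  also have "g 1 \<le> g i"
    using lift_Suc_mono_le_ivl[of "{1..<2*s+1}" g] g_mono assms by auto
  finally show "0 \<le> g i" .
  have "g i \<le> g (2*s+1)"
    using lift_Suc_mono_le_ivl[of "{1..<2*s+1}" g] g_mono assms by auto
  also have "\<dots> \<le> 2"
    using a_nonneg[of "2*s-1"] a_outside[of "2*s+1"] by (simp add: g_def)
  finally show "g i \<le> 2" .
qed

lemma g_thresholds:
  "\<exists>t1 t2. 1 \<le> t1 \<and> t1 \<le> t2 \<and> t2 \<le> 2*s+2 \<and>
     (\<forall>i\<in>{1..2*s+1}. g i = of_bool (t1 \<le> i) + of_bool (t2 \<le> i))"
proof -
  obtain t1 where t1: "1 \<le> t1" "t1 \<le> 2*s+2" "\<forall>i\<in>{1..2*s+1}. 1 \<le> g i \<longleftrightarrow> t1 \<le> i"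
    using monotone_threshold[of "2*s+1" g 1] g_mono by auto
  obtain t2 where t2: "1 \<le> t2" "t2 \<le> 2*s+2" "\<forall>i\<in>{1..2*s+1}. 2 \<le> g i \<longleftrightarrow> t2 \<le> i"
    using monotone_threshold[of "2*s+1" g 2] g_mono by auto
  have "t1 \<le> t2"
  proof (cases "t2 \<le> 2*s+1")
    case True
    then have "2 \<le> g t2" using t2 by auto
    then show ?thesis using t1(3) t2(1) True by auto
  qed (use t1 in auto)
  moreover have "g i = of_bool (t1 \<le> i) + of_bool (t2 \<le> i)" if "i \<in> {1..2*s+1}" for i
    using t1(3) t2(3) g_bounds[OF that] that by fastforce
  ultimately show ?thesis using t1 t2 by blast
qed

end

locale top_support_thresholds = top_support_triple +
  fixes t1 t2 :: nat
  assumes t1_ge_1: "1 \<le> t1" and t1_le_t2: "t1 \<le> t2" and t2_le: "t2 \<le> 2*s+2"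
    and g_eq: "\<And>i. i \<in> {1..2*s+1} \<Longrightarrow> g i = of_bool (t1 \<le> i) + of_bool (t2 \<le> i)"
begin

lemma a_parity_count_form:
  "k \<le> 2*s+1 \<Longrightarrow>
    a k = parity_count t1 k + parity_count t2 k - parity_count (p+1) k - parity_count (q+1) k"
proof (induction k rule: less_induct)
  case (less k)
  show ?case
  proof (cases "k = 0")
    case True
    then show ?thesis using t1_ge_1 t1_le_t2 a_outside[of 0] by (simp add: parity_count_def)
  next
    case False
    then have "a k - a (k-2) = of_bool (t1 \<le> k) + of_bool (t2 \<le> k) - of_bool (p < k) - of_bool (q < k)"
      using g_eq[of k] less.prems by (simp add: g_def del: of_bool_eq)
    then show ?thesis
      using less.IH[of "k-2"] less.prems False t1_ge_1 t1_le_t2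
        parity_count_step[of t1 k] parity_count_step[of t2 k]
        parity_count_step[of "p+1" k] parity_count_step[of "q+1" k]
      by (simp add: Suc_le_eq)
  qed
qed

lemma a_odd:
  assumes "K \<le> s"
  shows "a (2*K+1) = max 0 (int K + 1 - int (t1 div 2)) + max 0 (int K + 1 - int (t2 div 2))
    - max 0 (int K + 1 - int ((p+1) div 2)) - max 0 (int K + 1 - int ((q+1) div 2))"
  using a_parity_count_form[of "2*K+1"] assms unfolding parity_count_odd by simp

lemma a_even:
  assumes "K \<le> s"
  shows "a (2*K) = max 0 (int K - int ((t1-1) div 2)) + max 0 (int K - int ((t2-1) div 2))
    - max 0 (int K - int (p div 2)) - max 0 (int K - int (q div 2))"
  using a_parity_count_form[of "2*K"] assms t1_ge_1 t1_le_t2 by (simp add: parity_count_even)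

lemma half_sum_eq: "t1 div 2 + t2 div 2 = (p+1) div 2 + (q+1) div 2"
proof -
  have "t1 div 2 \<le> s+1" "t2 div 2 \<le> s+1" "(p+1) div 2 \<le> s+1" "(q+1) div 2 \<le> s+1"
    using t1_le_t2 t2_le p_le_q q_le by linarith+
  then show ?thesis
    using a_odd[of s] a_outside[of "2*s+1"] by simp
qed

lemma half_pred_sum_less: "(t1-1) div 2 + (t2-1) div 2 < p div 2 + q div 2"
proof -
  have "(t1-1) div 2 \<le> s" "(t2-1) div 2 \<le> s" "p div 2 \<le> s" "q div 2 \<le> s"
    using t1_le_t2 t2_le p_le_q q_le by linarith+
  then show ?thesis
    using a_even[of s] a_eq_b[of "2*s"] b_top s_ge_2 by simp
qed

lemma half_t1_le: "t1 div 2 \<le> (p+1) div 2"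
proof (rule ccontr)
  assume *: "\<not> ?thesis"
  have "t1 div 2 - 1 \<le> s"
    using t2_le t1_le_t2 by linarith
  then show False
    using * a_odd[of "t1 div 2 - 1"] a_nonneg[of "2*(t1 div 2 - 1) + 1"] t1_le_t2 p_le_q by simp
qed

lemma half_pred_t1_le: "(t1-1) div 2 \<le> p div 2"
proof (rule ccontr)
  assume *: "\<not> ?thesis"
  have "(t1-1) div 2 \<le> s" "(t1-1) div 2 \<le> (t2-1) div 2" "p div 2 \<le> q div 2"
    using t2_le t1_le_t2 p_le_q by (simp_all add: div_le_mono)
  then show False
    using * a_even[of "(t1-1) div 2"] a_nonneg[of "2*((t1-1) div 2)"] by simp
qed

lemma at_most_one_odd:
  "3 \<le> of_bool (even t1) + of_bool (even t2) + of_bool (even p) + (of_bool (even q) :: nat)"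
proof -
  have pred: "(x - 1) div 2 + of_bool (even x) = x div 2" if "1 \<le> x" for x :: nat
    using that by (cases "even x") (auto elim!: evenE oddE)
  have succ: "(x + 1) div 2 = x div 2 + of_bool (odd x)" for x :: nat
    by (cases "even x") (auto elim!: evenE oddE)
  have odd_even: "of_bool (odd x) + of_bool (even x) = (1 :: nat)" for x :: nat
    by simp
  show ?thesis
    using half_sum_eq half_pred_sum_less succ[of p] succ[of q] pred[of t1] pred[of t2]
      t1_ge_1 t1_le_t2 odd_even[of p] odd_even[of q] by linarith
qed

lemma no_blocked_descent:
  assumes r: "r \<in> {p, q}" "even r" "r \<le> 2*s-2" "p div 2 \<le> r div 2"
    and "q div 2 \<le> r div 2 \<or> (t1-1) div 2 < p div 2"
  shows False
proof -
  have "2 \<le> r" using r p_ge_1 p_le_q by auto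
  then obtain i where i: "even i" "r \<le> i" "i \<le> 2*s" "b i = 0"
    using descent_blocked r by blast
  define K where "K = i div 2"
  have K: "i = 2*K" "K \<le> s" "r div 2 \<le> K"
    using i by (auto simp: K_def div_le_mono)
  have "(t1-1) div 2 \<le> (t2-1) div 2" "p div 2 \<le> q div 2"
    using t1_le_t2 p_le_q by (simp_all add: div_le_mono)
  then have "1 \<le> a (2*K)"
    unfolding a_even[OF K(2)] using assms K(3) half_pred_t1_le half_pred_sum_less
    by (intro pos_part_combination_ge_1) auto
  moreover have "a (2*K) = 0"
    using i K \<open>2 \<le> r\<close> a_eq_b[of i] by simp
  ultimately show False by simp
qed

lemma no_descent_from_p:
  assumes "even p" "(t1-1) div 2 < p div 2" "p \<le> 2*s-2"
  shows False
  using no_blocked_descent[of p] assms by simp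

text \<open>\<open>F (2s+1) \<ge> 0\<close>, expressed through the thresholds.\<close>

lemma top_indicator_bound:
  "of_bool (t1 \<le> 2*s) + of_bool (t2 \<le> 2*s) - of_bool (p < 2*s) - of_bool (q < 2*s)
    + of_bool (t1 \<le> 2*s+1) + of_bool (t2 \<le> 2*s+1) - of_bool (p \<le> 2*s) - of_bool (q \<le> 2*s)
   \<le> (of_bool (p = 2*s+1) + of_bool (q = 2*s+1) :: int)"
proof -
  have "g (2*s) = a (2*s) - a (2*s-2) + of_bool (p < 2*s) + of_bool (q < 2*s)"
    "g (2*s+1) = - a (2*s-1) + of_bool (p \<le> 2*s) + of_bool (q \<le> 2*s)"
    using a_outside[of "2*s+1"] by (auto simp: g_def)
  moreover have "g (2*s) = of_bool (t1 \<le> 2*s) + of_bool (t2 \<le> 2*s)"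
    "g (2*s+1) = of_bool (t1 \<le> 2*s+1) + of_bool (t2 \<le> 2*s+1)"
    using s_ge_2 by (simp_all add: g_eq)
  moreover have "0 \<le> F (2*s+1)" by (rule F_nonneg)
  ultimately show ?thesis
    using F_coord[of "2*s+1"] a_outside[of "2*s+1"] a_outside[of "2*s+2"] by auto
qed

lemma q_ge_2s: "2*s \<le> q"
proof (rule ccontr)
  assume q: "\<not> ?thesis"
  show False
  proof (cases "even q")
    case True
    then show False
      using no_blocked_descent[of q] q p_le_q by (simp add: div_le_mono; presburger)
  next
    case False
    then have "even t1" "even p"
      using at_most_one_odd by (auto simp: of_bool_def split: if_splits)
    moreover have "(t1-1) div 2 < p div 2"
      using half_t1_le t1_ge_1 \<open>even t1\<close> \<open>even p\<close> by (auto elim!: evenE)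
    ultimately show False
      using no_descent_from_p q p_le_q False by presburger
  qed
qed

lemma t2_eq: "t2 = 2*s+2"
proof (rule ccontr)
  assume "t2 \<noteq> 2*s+2"
  then have t2: "t2 \<le> 2*s+1" using t2_le by simp
  have "s \<le> t2 div 2"
    using half_sum_eq half_t1_le q_ge_2s by linarith
  then have "2*s \<le> t2" by linarith
  have "q \<noteq> 2*s+1"
    using half_sum_eq half_t1_le t2 by (auto; linarith)
  then have q: "q = 2*s" using q_ge_2s q_le by simp
  then have bound: "of_bool (t1 \<le> 2*s) + of_bool (t2 \<le> 2*s) \<le> (of_bool (p < 2*s) :: int)"
    using top_indicator_bound t2 t1_le_t2 p_le_q by simp
  then have t2_odd: "t2 = 2*s+1"
    using \<open>2*s \<le> t2\<close> t2 t1_le_t2 by (auto simp: of_bool_def split: if_splits)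
  then have "even t1" "even p"
    using at_most_one_odd by (auto simp: of_bool_def split: if_splits)
  then have "t1 \<le> 2*s"
    using t1_le_t2 t2_odd by presburger
  then have "p < 2*s"
    using bound by (auto simp: of_bool_def split: if_splits)
  have "t1 div 2 = (p+1) div 2"
    using half_sum_eq q t2_odd by simp
  then have "(t1-1) div 2 < p div 2"
    using t1_ge_1 \<open>even t1\<close> \<open>even p\<close> by (auto elim!: evenE)
  then show False
    using no_descent_from_p \<open>even p\<close> \<open>p < 2*s\<close> by presburger
qed

lemma p_t1_q_2s_plus_1:
  assumes "q = 2*s+1"
  shows "p = 2*s \<and> t1 = 2*s"
proof -
  have "even t1" "even p"
    using at_most_one_odd assms t2_eq by (auto simp: of_bool_def split: if_splits)
  moreover have "t1 div 2 = (p+1) div 2"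
    using half_sum_eq assms t2_eq by simp
  ultimately have "(t1-1) div 2 < p div 2" "t1 = p"
    using t1_ge_1 by (auto elim!: evenE)
  then have "p = 2*s"
    using no_descent_from_p \<open>even p\<close> p_le_q assms by presburger
  then show ?thesis using \<open>t1 = p\<close> by simp
qed

lemma p_t1_cases_q_2s:
  assumes "q = 2*s"
  shows "(\<exists>m. 1 \<le> m \<and> m < s \<and> p = 2*m+1 \<and> t1 = 2*m) \<or> (p = 2*s \<and> (t1 = 2*s-2 \<or> t1 = 2*s-1))"
proof -
  have half: "t1 div 2 + 1 = (p+1) div 2"
    using half_sum_eq assms t2_eq by simp
  show ?thesis
  proof (cases "even p")
    case True
    then have "(t1-1) div 2 < p div 2" using half by (auto elim!: evenE)
    then have "p = 2*s"
      using no_descent_from_p True p_le_q assms by presburger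
    then show ?thesis using half s_ge_2 by presburger
  next
    case False
    then have "even t1"
      using at_most_one_odd assms t2_eq by (auto simp: of_bool_def split: if_splits)
    then have "p = t1 + 1" "1 \<le> t1 div 2" "t1 div 2 < s"
      using half False t1_ge_1 p_le_q assms by (auto elim!: evenE oddE)
    then show ?thesis using \<open>even t1\<close> by (auto elim!: evenE)
  qed
qed

lemma F_below:
  assumes "1 \<le> j" "j \<le> 2*s"
  shows "F j = of_bool (t1 = Suc j) + of_bool (t2 = Suc j)"
proof -
  have step: "of_bool (t \<le> Suc j) = of_bool (t \<le> j) + (of_bool (t = Suc j) :: int)" for t
    by auto
  show ?thesis
    using g_step[OF assms] g_eq[of j] g_eq[of "Suc j"] assms unfolding step[of t1] step[of t2] by simp
qed

lemma F_eq_Dv: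
  assumes "2 \<le> t1" "t1 \<le> 2*s"
  shows "F = (\<lambda>j. Dv s (t1-1) j + F (2*s+1) * Dv s (2*s+1) j)"
proof
  fix j
  consider "1 \<le> j \<and> j \<le> 2*s" | "j = 2*s+1" | "\<not> (1 \<le> j \<and> j \<le> 2*s+1)"
    by linarith
  then show "F j = Dv s (t1-1) j + F (2*s+1) * Dv s (2*s+1) j"
  proof cases
    case 1
    then have "t1 = Suc j \<longleftrightarrow> j = t1 - 1" using assms by auto
    then show ?thesis using 1 F_below[of j] t2_eq assms by (auto simp: Dv_def)
  qed (use F_outside[of j] assms in \<open>auto simp: Dv_def\<close>)
qed

lemma F_top_eq:
  "F (2*s+1) = of_bool (p = 2*s+1) + of_bool (q = 2*s+1) - (b (2*s) - b (2*s-1) - b (2*s-2))"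
  using F_coord[of "2*s+1"] a_outside[of "2*s+1"] a_outside[of "2*s+2"] s_ge_2
    a_eq_b[of "2*s"] a_eq_b[of "2*s-1"] a_eq_b[of "2*s-2"] by simp

lemma b_eq:
  assumes "1 \<le> i" "i \<le> 2*s"
  shows "b i = parity_count t1 i - parity_count (p+1) i"
proof -
  have "parity_count t2 i = 0" "parity_count (q+1) i = 0"
    using assms t2_eq q_ge_2s by (simp_all add: parity_count_below)
  then show ?thesis
    using a_parity_count_form[of i] assms by (simp add: sigma_coeff_def)
qed

lemma top_cases_p_odd:
  assumes "1 \<le> m" "m < s" "p = 2*m+1" "q = 2*s" "t1 = 2*m"
  shows "low_triple_top_cases s (Dv s p) (Dv s q) F"
proof -
  have b: "b i = of_bool (2*m \<le> i)" if "1 \<le> i" "i \<le> 2*s" for i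
    using b_eq[OF that] parity_count_diff2[of "2*m" i] assms by (simp add: add.assoc)
  have "2*m \<le> 2*s-2" using assms by linarith
  then have "F (2*s+1) = 1"
    using F_top_eq b[of "2*s"] b[of "2*s-1"] b[of "2*s-2"] assms by simp
  then have "F = Dv s (2*m-1) + Dv s (2*s+1)"
    using F_eq_Dv assms by fastforce
  moreover have "Dv s p + Dv s q - F = sigma_comb s (\<lambda>i. of_bool (2*m \<le> i))"
    unfolding gamma_eq using b by (intro sigma_comb_cong) simp
  then have "Dv s p + Dv s q - F = (\<lambda>j. \<Sum>i=2*m..2*s. sigma s i j)"
    using sigma_comb_indicator_tail[of "2*m" s] assms by simp
  ultimately show ?thesis
    unfolding low_triple_top_cases_def using assms by blast
qed

lemma top_cases_t1_2s_minus_2: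
  assumes "p = 2*s" "q = 2*s" "t1 = 2*s-2"
  shows "low_triple_top_cases s (Dv s p) (Dv s q) F"
proof -
  have b: "b (2*s-2) = 1" "b (2*s-1) = 1" "b (2*s) = 2" "\<And>i. 1 \<le> i \<Longrightarrow> i < 2*s-2 \<Longrightarrow> b i = 0"
    using b_eq s_ge_2 assms by (auto simp: parity_count_def)
  then have "F (2*s+1) = 0"
    using F_top_eq assms by simp
  moreover have "2 \<le> t1" "t1 \<le> 2*s" "t1 - 1 = 2*s-3"
    using assms s_ge_2 by auto
  ultimately have "F = Dv s (2*s-3)"
    using F_eq_Dv by simp
  moreover have "Dv s p + Dv s q - F = sigma s (2*s-2) + sigma s (2*s-1) + 2 * sigma s (2*s)"
    using gamma_eq sigma_comb_top_three[OF s_ge_2, of b] b by fastforce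
  ultimately show ?thesis
    unfolding low_triple_top_cases_def using assms by blast
qed

lemma top_cases_t1_2s_minus_1:
  assumes "p = 2*s" "q = 2*s" "t1 = 2*s-1"
  shows "low_triple_top_cases s (Dv s p) (Dv s q) F"
proof -
  have b: "b (2*s-2) = 0" "b (2*s-1) = 1" "b (2*s) = 1" "\<And>i. 1 \<le> i \<Longrightarrow> i < 2*s-2 \<Longrightarrow> b i = 0"
    using b_eq s_ge_2 assms by (auto simp: parity_count_def)
  then have "F (2*s+1) = 0"
    using F_top_eq assms by simp
  moreover have "2 \<le> t1" "t1 \<le> 2*s" "t1 - 1 = 2*s-2"
    using assms s_ge_2 by auto
  ultimately have "F = Dv s (2*s-2)"
    using F_eq_Dv by simp
  moreover have "Dv s p + Dv s q - F = sigma s (2*s-1) + sigma s (2*s)"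
    using gamma_eq sigma_comb_top_three[OF s_ge_2, of b] b by fastforce
  ultimately show ?thesis
    unfolding low_triple_top_cases_def using assms by blast
qed

lemma top_cases_q_2s_plus_1:
  assumes "p = 2*s" "q = 2*s+1" "t1 = 2*s"
  shows "low_triple_top_cases s (Dv s p) (Dv s q) F"
proof -
  have b: "b (2*s-2) = 0" "b (2*s-1) = 0" "b (2*s) = 1" "\<And>i. 1 \<le> i \<Longrightarrow> i < 2*s-2 \<Longrightarrow> b i = 0"
    using b_eq s_ge_2 assms by (auto simp: parity_count_def)
  then have "F (2*s+1) = 0"
    using F_top_eq assms by simp
  moreover have "2 \<le> t1" "t1 \<le> 2*s" "t1 - 1 = 2*s-1"
    using assms s_ge_2 by auto
  ultimately have "F = Dv s (2*s-1)"
    using F_eq_Dv by simp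
  moreover have "Dv s p + Dv s q - F = sigma s (2*s)"
    using gamma_eq sigma_comb_top_three[OF s_ge_2, of b] b by fastforce
  ultimately show ?thesis
    unfolding low_triple_top_cases_def using assms by blast
qed

lemma low_triple_top_cases: "low_triple_top_cases s (Dv s p) (Dv s q) F"
proof -
  have "q = 2*s \<or> q = 2*s+1" using q_ge_2s q_le by linarith
  then show ?thesis
    using p_t1_cases_q_2s p_t1_q_2s_plus_1 top_cases_p_odd top_cases_t1_2s_minus_2
      top_cases_t1_2s_minus_1 top_cases_q_2s_plus_1
    by blast
qed

end

lemma is_low_swap: "is_low s D E F \<Longrightarrow> is_low s E D F"
  unfolding is_low_def by (metis add.commute)

lemma low_triple_top_cases_if_ordered:
  assumes s: "2 \<le> s" and low: "is_low s (Dv s p) (Dv s q) F"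
    and pq: "1 \<le> p" "p \<le> q" "q \<le> 2*s+1"
    and supp: "in_suppS s (2*s) (Dv s p + Dv s q - F)"
  shows "low_triple_top_cases s (Dv s p) (Dv s q) F"
proof -
  obtain b where b: "\<And>i. 0 \<le> b i" and gamma: "Dv s p + Dv s q - F = sigma_comb s b"
    using low by (auto simp: is_low_def leS_def in_NSigma_def)
  obtain b' where "Dv s p + Dv s q - F = sigma_comb s b'" "0 < b' (2*s)"
    using supp by (auto simp: in_suppS_def)
  then have "1 \<le> b (2*s)"
    using sigma_comb_coeff_unique[OF s, of b b' "2*s"] gamma s by simp
  moreover have "\<exists>i. even i \<and> r \<le> i \<and> i \<le> 2*s \<and> b i = 0"
    if "r \<in> {p, q}" "even r" "2 \<le> r" "r \<le> 2*s-2" for r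
  proof -
    have "Dv s q + Dv s p - F = sigma_comb s b"
      using gamma by (simp add: add.commute)
    then show ?thesis
      using that low_descent_blocked[OF s low gamma b]
        low_descent_blocked[OF s is_low_swap[OF low] _ b] by (elim insertE) auto
  qed
  moreover have "in_NDelta s F"
    using low by (simp add: is_low_def)
  ultimately interpret top_support_triple s p q F b
    using s pq gamma b by unfold_locales auto
  obtain t1 t2 where "1 \<le> t1" "t1 \<le> t2" "t2 \<le> 2*s+2"
      "\<And>i. i \<in> {1..2*s+1} \<Longrightarrow> g i = of_bool (t1 \<le> i) + of_bool (t2 \<le> i)"
    using g_thresholds by blast
  then interpret top_support_thresholds s p q F b t1 t2
    by unfold_locales
  show ?thesis by (rule low_triple_top_cases)
qed

theorem lemma2p13:
  fixes s :: nat and D E F :: zvec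
  assumes "s \<ge> 2"
    and "is_low s D E F" and "is_fundamental s D E F"
    and "in_suppS s (2*s) (D + E - F)"
  shows "\<exists>D1 E1. ((D1 = D \<and> E1 = E) \<or> (D1 = E \<and> E1 = D)) \<and>
    ((\<exists>m. 1 \<le> m \<and> m < s \<and> D1 = Dv s (2*m+1) \<and> E1 = Dv s (2*s)
        \<and> F = Dv s (2*m-1) + Dv s (2*s+1)
        \<and> D + E - F = (\<lambda>j. \<Sum>i=2*m..2*s. sigma s i j))
     \<or> (D1 = Dv s (2*s) \<and> E1 = Dv s (2*s) \<and> F = Dv s (2*s-3)
        \<and> D + E - F = sigma s (2*s-2) + sigma s (2*s-1) + 2 * sigma s (2*s))
     \<or> (D1 = Dv s (2*s) \<and> E1 = Dv s (2*s) \<and> F = Dv s (2*s-2)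
        \<and> D + E - F = sigma s (2*s-1) + sigma s (2*s))
     \<or> (D1 = Dv s (2*s) \<and> E1 = Dv s (2*s+1) \<and> F = Dv s (2*s-1)
        \<and> D + E - F = sigma s (2*s)))"
proof -
  obtain p q where p: "1 \<le> p" "p \<le> 2*s+1" "D = Dv s p" and q: "1 \<le> q" "q \<le> 2*s+1" "E = Dv s q"
    using assms(3) unfolding is_fundamental_def in_Delta_def by blast
  have "low_triple_top_cases s D E F \<or> low_triple_top_cases s E D F"
  proof (cases "p \<le> q")
    case True
    then show ?thesis
      using low_triple_top_cases_if_ordered[OF assms(1) _ p(1) True q(2)] assms(2,4) p(3) q(3) by simp
  next
    case False
    moreover have "is_low s (Dv s q) (Dv s p) F"
      using is_low_swap assms(2) p(3) q(3) by simp
    moreover have "in_suppS s (2*s) (Dv s q + Dv s p - F)"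
      using assms(4) p(3) q(3) by (simp add: add.commute)
    ultimately have "low_triple_top_cases s (Dv s q) (Dv s p) F"
      using low_triple_top_cases_if_ordered assms(1) p(2) q(1) by simp
    then show ?thesis using p(3) q(3) by simp
  qed
  then show ?thesis
  proof
    assume "low_triple_top_cases s D E F"
    then show ?thesis unfolding low_triple_top_cases_def by blast
  next
    assume "low_triple_top_cases s E D F"
    then show ?thesis unfolding low_triple_top_cases_def add.commute[of E D] by blast
  qed
qed

end
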